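(* Let $\mathscr B$ be a family of boxes in $\mathbb R^2$ with $\nu(\mathscr B)$ finite. Suppose there exist two lines $l_1,l_2$ parallel to the $x$-axis such that every box of $\mathscr B$ intersects at least one of $l_1,l_2$. Then $\tau(\mathscr B)\leqslant \left[\frac{3\nu(\mathscr B)}{2}\right]$.
   Context: A box in $\mathbb R^2$ is a set $[a_1,b_1]\times[a_2,b_2]$ with sides parallel to the coordinate axes. For a family $\mathscr B$ of boxes, $\nu(\mathscr B)$ is the maximal number of pairwise disjoint members of $\mathscr B$, and $\tau(\mathscr B)$ is the minimal number of points in a set meeting every member of $\mathscr B$. $[x]$ denotes the integer part of $x$. *)

theory Defs
  imports Main "HOL-Library.Extended_Nat"
begin

definition is_box :: "(real \<times> real) set \<Rightarrow> bool" where
  "is_box S \<longleftrightarrow> (\<exists>a1 b1 a2 b2. a1 \<le> b1 \<and> a2 \<le> b2 \<and> S = {a1..b1} \<times> {a2..b2})"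

definition nu :: "(real \<times> real) set set \<Rightarrow> enat" where
  "nu B = Sup {enat (card S) | S. S \<subseteq> B \<and> finite S \<and> pairwise disjnt S}"

text \<open>tau: minimal number of points of a set meeting every member
  (infinity if no finite piercing set exists).\<close>
definition tau :: "(real \<times> real) set set \<Rightarrow> enat" where
  "tau B = Inf {enat (card P) | P. finite P \<and> (\<forall>b\<in>B. P \<inter> b \<noteq> {})}"

definition hline :: "real \<Rightarrow> (real \<times> real) set" where
  "hline c = {p. snd p = c}"

end

theory Submission
  imports Defs
begin

text \<open>Let \<open>T\<close> be the set of abscissae \<open>t\<close> such that two disjoint boxes lie in the half-plane
  \<open>x \<le> t\<close>. If \<open>T\<close> is empty the boxes pairwise intersect, and by Helly's theorem for boxes one
  point pierces them all. Otherwise, put \<open>t\<^sub>0 = inf T\<close>. The boxes lying entirely left of every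
  \<open>t \<in> T\<close> pairwise intersect and are pierced by one point; any packing of the boxes lying right
  of some \<open>t \<in> T\<close> extends by two disjoint boxes, so those have packing number at most \<open>\<nu> - 2\<close>
  and need at most \<open>[3(\<nu> - 2)/2]\<close> points by induction; every remaining box meets the vertical
  line \<open>x = t\<^sub>0\<close> and one of the two horizontal lines, so \<open>(t\<^sub>0, c\<^sub>1)\<close> and \<open>(t\<^sub>0, c\<^sub>2)\<close> pierce it.
  In total \<open>1 + 2 + [3(\<nu> - 2)/2] = [3\<nu>/2]\<close>.\<close>

definition lft :: "(real \<times> real) set \<Rightarrow> real" where "lft b = Inf (fst ` b)"
definition rgt :: "(real \<times> real) set \<Rightarrow> real" where "rgt b = Sup (fst ` b)"
definition lo :: "(real \<times> real) set \<Rightarrow> real" where "lo b = Inf (snd ` b)"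
definition hi :: "(real \<times> real) set \<Rightarrow> real" where "hi b = Sup (snd ` b)"

definition packing_bounded :: "(real \<times> real) set set \<Rightarrow> nat \<Rightarrow> bool" where
  "packing_bounded B n \<longleftrightarrow> (\<forall>S\<subseteq>B. finite S \<and> pairwise disjnt S \<longrightarrow> card S \<le> n)"

definition pierces :: "(real \<times> real) set \<Rightarrow> (real \<times> real) set set \<Rightarrow> bool" where
  "pierces P B \<longleftrightarrow> (\<forall>b\<in>B. P \<inter> b \<noteq> {})"

definition disjoint_pair_thresholds :: "(real \<times> real) set set \<Rightarrow> real set" where
  "disjoint_pair_thresholds B =
     {t. \<exists>b1\<in>B. \<exists>b2\<in>B. disjnt b1 b2 \<and> rgt b1 \<le> t \<and> rgt b2 \<le> t}"

lemma box_edges: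
  assumes "is_box b"
  shows "b = {lft b..rgt b} \<times> {lo b..hi b}" "lft b \<le> rgt b" "lo b \<le> hi b"
proof -
  obtain a1 b1 a2 b2 where h: "a1 \<le> b1" "a2 \<le> b2" "b = {a1..b1} \<times> {a2..b2}"
    using assms unfolding is_box_def by blast
  have "lft b = a1" "rgt b = b1" "lo b = a2" "hi b = b2"
    using h by (auto simp: lft_def rgt_def lo_def hi_def)
  with h show "b = {lft b..rgt b} \<times> {lo b..hi b}" "lft b \<le> rgt b" "lo b \<le> hi b"
    by auto
qed

lemma mem_box_iff:
  assumes "is_box b"
  shows "p \<in> b \<longleftrightarrow> lft b \<le> fst p \<and> fst p \<le> rgt b \<and> lo b \<le> snd p \<and> snd p \<le> hi b"
  by (subst box_edges(1)[OF assms]) (simp add: mem_Times_iff)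

lemma box_disjoint_iff:
  assumes "is_box b" "is_box b'"
  shows "disjnt b b' \<longleftrightarrow> rgt b < lft b' \<or> rgt b' < lft b \<or> hi b < lo b' \<or> hi b' < lo b"
proof
  assume "disjnt b b'"
  moreover have "(max (lft b) (lft b'), max (lo b) (lo b')) \<in> b \<inter> b'"
    if "\<not> (rgt b < lft b' \<or> rgt b' < lft b \<or> hi b < lo b' \<or> hi b' < lo b)"
    using that box_edges(2,3)[OF assms(1)] box_edges(2,3)[OF assms(2)]
    by (auto simp: mem_box_iff[OF assms(1)] mem_box_iff[OF assms(2)])
  ultimately show "rgt b < lft b' \<or> rgt b' < lft b \<or> hi b < lo b' \<or> hi b' < lo b"
    unfolding disjnt_def by blast
next
  assume "rgt b < lft b' \<or> rgt b' < lft b \<or> hi b < lo b' \<or> hi b' < lo b"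
  then show "disjnt b b'"
    by (auto simp: disjnt_def mem_box_iff[OF assms(1)] mem_box_iff[OF assms(2)])
qed

lemma box_meets_hline_iff:
  assumes "is_box b"
  shows "b \<inter> hline c \<noteq> {} \<longleftrightarrow> lo b \<le> c \<and> c \<le> hi b"
proof
  assume "lo b \<le> c \<and> c \<le> hi b"
  then have "(lft b, c) \<in> b \<inter> hline c"
    using box_edges(2)[OF assms] by (simp add: mem_box_iff[OF assms] hline_def)
  then show "b \<inter> hline c \<noteq> {}" by blast
qed (auto simp: mem_box_iff[OF assms] hline_def)

text \<open>Helly's theorem for boxes: the point with coordinates the suprema of the left and of the
  lower edges lies in every box.\<close>

lemma pairwise_intersecting_boxes_common_point:
  assumes boxes: "\<forall>b\<in>L. is_box b"
    and meet: "\<forall>b\<in>L. \<forall>b'\<in>L. \<not> disjnt b b'"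
  obtains p where "\<forall>b\<in>L. p \<in> b"
proof (cases "L = {}")
  case False
  have edges: "lft b \<le> rgt b' \<and> lo b \<le> hi b'" if "b \<in> L" "b' \<in> L" for b b'
    using meet box_disjoint_iff[of b' b] boxes that by force
  define x where "x = Sup (lft ` L)"
  define y where "y = Sup (lo ` L)"
  obtain b0 where "b0 \<in> L" using \<open>L \<noteq> {}\<close> by blast
  then have "bdd_above (lft ` L)" "bdd_above (lo ` L)"
    using edges by (auto intro: bdd_aboveI[of _ "rgt b0"] bdd_aboveI[of _ "hi b0"])
  then have "(x, y) \<in> b" if "b \<in> L" for b
    using that edges \<open>L \<noteq> {}\<close> boxes
    by (auto simp: mem_box_iff x_def y_def intro: cSup_upper cSup_least)
  then show thesis using that by blast
qed (use that in blast)

lemma packing_bounded_nu: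
  assumes "nu B = enat n"
  shows "packing_bounded B n"
  unfolding packing_bounded_def
proof (intro allI impI)
  fix S assume "S \<subseteq> B" "finite S \<and> pairwise disjnt S"
  then have "enat (card S) \<le> nu B"
    unfolding nu_def by (intro Sup_upper) blast
  with assms show "card S \<le> n" by simp
qed

lemma tau_le_card:
  assumes "finite P" "pierces P B"
  shows "tau B \<le> enat (card P)"
  using assms unfolding tau_def pierces_def by (intro Inf_lower) blast

lemma packing_bounded_add_disjoint_pair:
  assumes boxes: "\<forall>b\<in>B. is_box b" and bnd: "packing_bounded B n"
    and pair: "b1 \<in> B" "b2 \<in> B" "disjnt b1 b2"
    and S: "S \<subseteq> B" "finite S" "pairwise disjnt S"
    and right: "\<forall>b\<in>S. rgt b1 < lft b \<and> rgt b2 < lft b"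
  shows "card S + 2 \<le> n"
proof -
  have box1: "is_box b1" and box2: "is_box b2" using boxes pair by auto
  have "b1 \<notin> S" "b2 \<notin> S" using right box_edges(2)[OF box1] box_edges(2)[OF box2] by fastforce+
  moreover have "b1 \<noteq> b2"
    using pair(3) box_edges(2,3)[OF box1] box_disjoint_iff[OF box1 box1] by auto
  moreover have "disjnt b1 b" "disjnt b2 b" if "b \<in> S" for b
    using right that boxes S(1) box_disjoint_iff box1 box2 by blast+
  then have "pairwise disjnt (insert b1 (insert b2 S))"
    using S(3) pair(3) by (auto simp: pairwise_insert disjnt_sym)
  then have "card (insert b1 (insert b2 S)) \<le> n"
    using bnd S pair unfolding packing_bounded_def by simp
  ultimately show ?thesis using S(2) by simp
qed

lemma packing_bounded_one:
  "packing_bounded B n \<Longrightarrow> b \<in> B \<Longrightarrow> 1 \<le> n"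
  unfolding packing_bounded_def by (drule spec[of _ "{b}"]) simp

lemma disjoint_pair_thresholdsI:
  "b1 \<in> B \<Longrightarrow> b2 \<in> B \<Longrightarrow> disjnt b1 b2 \<Longrightarrow> rgt b1 \<le> t \<Longrightarrow> rgt b2 \<le> t
    \<Longrightarrow> t \<in> disjoint_pair_thresholds B"
  unfolding disjoint_pair_thresholds_def by blast

lemma packing_bounded_right_part:
  assumes boxes: "\<forall>b\<in>B. is_box b" and bnd: "packing_bounded B n"
  defines "T \<equiv> disjoint_pair_thresholds B"
  shows "packing_bounded {b\<in>B. \<exists>t\<in>T. t < lft b} (n - 2)"
  unfolding packing_bounded_def
proof (intro allI impI)
  fix S assume S: "S \<subseteq> {b\<in>B. \<exists>t\<in>T. t < lft b}" "finite S \<and> pairwise disjnt S"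
  show "card S \<le> n - 2"
  proof (cases "S = {}")
    case False
    have "Min (lft ` S) \<in> lft ` S" using S False by (intro Min_in) auto
    then obtain b0 where b0: "b0 \<in> S" "lft b0 = Min (lft ` S)" by auto
    then have leftmost: "\<forall>b\<in>S. lft b0 \<le> lft b" using S by simp
    obtain t b1 b2 where "b1 \<in> B" "b2 \<in> B" "disjnt b1 b2" "rgt b1 \<le> t" "rgt b2 \<le> t"
      "t < lft b0"
      using S b0(1) unfolding T_def disjoint_pair_thresholds_def by blast
    then have "card S + 2 \<le> n"
      using packing_bounded_add_disjoint_pair[OF boxes bnd, of b1 b2 S] S leftmost by fastforce
    then show ?thesis by simp
  qed simp
qed

lemma left_part_pairwise_intersecting:
  assumes "b \<in> B" "b' \<in> B"
    and "\<forall>t\<in>disjoint_pair_thresholds B. rgt b < t" "\<forall>t\<in>disjoint_pair_thresholds B. rgt b' < t"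
  shows "\<not> disjnt b b'"
proof
  assume "disjnt b b'"
  then have "max (rgt b) (rgt b') \<in> disjoint_pair_thresholds B"
    using assms(1,2) by (intro disjoint_pair_thresholdsI[of b B b']) simp_all
  with assms(3,4) have "rgt b < max (rgt b) (rgt b')" "rgt b' < max (rgt b) (rgt b')"
    by blast+
  then show False by (simp add: max_def split: if_splits)
qed

lemma cInf_between:
  fixes T :: "'a::conditionally_complete_linorder set"
  assumes "\<exists>t\<in>T. t \<le> r" "\<forall>t\<in>T. l \<le> t"
  shows "l \<le> Inf T \<and> Inf T \<le> r"
proof
  obtain t where t: "t \<in> T" "t \<le> r" using assms(1) by blast
  then show "l \<le> Inf T" using assms(2) by (intro cInf_greatest) auto
  have "bdd_below T" using assms(2) by (auto intro: bdd_belowI)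
  with t show "Inf T \<le> r" using cInf_lower order_trans by blast
qed

lemma box_in_left_right_or_column:
  assumes "is_box b" "b \<inter> hline c1 \<noteq> {} \<or> b \<inter> hline c2 \<noteq> {}"
  shows "(\<forall>t\<in>T. rgt b < t) \<or> (\<exists>t\<in>T. t < lft b) \<or> (Inf T, c1) \<in> b \<or> (Inf T, c2) \<in> b"
proof -
  have "(Inf T, c1) \<in> b \<or> (Inf T, c2) \<in> b"
    if "\<exists>t\<in>T. t \<le> rgt b" "\<forall>t\<in>T. lft b \<le> t"
    using cInf_between[OF that] assms
    by (auto simp: mem_box_iff[OF assms(1)] box_meets_hline_iff[OF assms(1)])
  then show ?thesis by (meson not_less)
qed

lemma two_lines_piercing:
  assumes "\<forall>b\<in>B. is_box b" "\<forall>b\<in>B. b \<inter> hline c1 \<noteq> {} \<or> b \<inter> hline c2 \<noteq> {}"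
    and "packing_bounded B n"
  obtains P where "finite P" "card P \<le> 3 * n div 2" "pierces P B"
  using assms
proof (induction n arbitrary: B thesis rule: less_induct)
  case (less n)
  note boxes = less.prems(2) and lines = less.prems(3) and bnd = less.prems(4)
  define T where "T = disjoint_pair_thresholds B"
  define L where "L = {b\<in>B. \<forall>t\<in>T. rgt b < t}"
  define R where "R = {b\<in>B. \<exists>t\<in>T. t < lft b}"
  have "\<forall>b\<in>L. is_box b" using boxes unfolding L_def by simp
  moreover have "\<forall>b\<in>L. \<forall>b'\<in>L. \<not> disjnt b b'"
    using left_part_pairwise_intersecting[of _ B] unfolding L_def T_def by blast
  ultimately obtain p where "\<forall>b\<in>L. p \<in> b"
    by (rule pairwise_intersecting_boxes_common_point)
  then have p: "pierces {p} L" unfolding pierces_def by blast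
  show thesis
  proof (cases "T = {}")
    case True
    then have "pierces {p} B" using p unfolding L_def by simp
    moreover have "B = {} \<or> 1 \<le> n" using packing_bounded_one[OF bnd] by blast
    ultimately show thesis using less.prems(1)[of "{p}"] less.prems(1)[of "{}"]
      by (auto simp: pierces_def)
  next
    case False
    then obtain b1 b2 where "b1 \<in> B" "b2 \<in> B" "disjnt b1 b2"
      unfolding T_def disjoint_pair_thresholds_def by blast
    then have n2: "2 \<le> n"
      using packing_bounded_add_disjoint_pair[OF boxes bnd, of b1 b2 "{}"] by simp
    obtain Q where Q: "finite Q" "card Q \<le> 3 * (n - 2) div 2" "pierces Q R"
      using less.IH[of "n - 2" R] n2 boxes lines
        packing_bounded_right_part[OF boxes bnd] unfolding R_def T_def by auto
    define P where "P = Q \<union> {p, (Inf T, c1), (Inf T, c2)}"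
    have "card P \<le> card Q + 3"
      unfolding P_def using Q(1) by (simp add: card_insert_if)
    also have "\<dots> \<le> 3 * n div 2" using Q(2) n2 by linarith
    finally have "card P \<le> 3 * n div 2" .
    moreover have "pierces P B"
      unfolding pierces_def
    proof
      fix b assume "b \<in> B"
      then consider "b \<in> L" | "b \<in> R" | "(Inf T, c1) \<in> b" | "(Inf T, c2) \<in> b"
        using box_in_left_right_or_column[of b c1 c2 T] boxes lines unfolding L_def R_def by blast
      then show "P \<inter> b \<noteq> {}"
        using p Q(3) unfolding P_def pierces_def by cases auto
    qed
    moreover have "finite P" unfolding P_def using Q(1) by simp
    ultimately show thesis using less.prems(1) by blast
  qed
qed

theorem lemma2:
  fixes B :: "(real \<times> real) set set" and c1 c2 :: real
  assumes "\<forall>b\<in>B. is_box b"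
    and "nu B \<noteq> \<infinity>"
    and "\<forall>b\<in>B. b \<inter> hline c1 \<noteq> {} \<or> b \<inter> hline c2 \<noteq> {}"
  shows "tau B \<le> enat ((3 * the_enat (nu B)) div 2)"
proof -
  obtain n where n: "nu B = enat n" using assms(2) by auto
  obtain P where "finite P" "card P \<le> 3 * n div 2" "pierces P B"
    using two_lines_piercing[OF assms(1,3) packing_bounded_nu[OF n]] .
  then have "tau B \<le> enat (card P)" "enat (card P) \<le> enat (3 * n div 2)"
    using tau_le_card by simp_all
  then show ?thesis using n by (simp del: enat_ord_simps)
qed

end
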